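(* (Euler's Homogeneous Theorem) Let $f$ be a function on the Cartesian $\mathbb Z_2^n$-manifold $\mathbb R^{p|\mathbf q}$ which is $\nabla^{p|\mathbf q}$-homogeneous of weight $1$, i.e. $\nabla^{p|\mathbf q}(f)=f$, where $\nabla^{p|\mathbf q}=\sum_a x^a\partial_{x^a}+\sum_\alpha\xi^\alpha\partial_{\xi^\alpha}$. Then there exist real numbers $F_a,G_\alpha\in\mathbb R$ such that $f=\sum_aF_ax^a+\sum_\alpha G_\alpha\xi^\alpha$.
   Context: Fix $n\ge 1$. The Cartesian $\mathbb Z_2^n$-manifold of dimension $p|\mathbf q$, $\mathbf q=(q_1,\dots,q_{2^n-1})$, is $\mathbb R^{p|\mathbf q}=(\mathbb R^p,C^\infty_{\mathbb R^p}[[\xi]])$, where $x^a$ are the standard linear coordinates on $\mathbb R^p$ (degree $0$) and $\xi^\alpha$ are formal coordinates, $q_i$ of them of the $i$-th non-zero degree in $\mathbb Z_2^n$, with $\xi^\alpha\xi^\beta=(-1)^{\langle\deg\xi^\alpha,\deg\xi^\beta\rangle}\xi^\beta\xi^\alpha$ ($\langle\cdot,\cdot\rangle$ the dot product mod 2; variables with odd self-pairing square to zero, the others generate formal power series). Functions on $\mathbb R^{p|\mathbf q}$ are global sections $f=\sum_{\boldsymbol\alpha}\xi^{\boldsymbol\alpha}f_{\boldsymbol\alpha}(x)$ (multi-index notation, $f_{\boldsymbol\alpha}$ smooth on $\mathbb R^p$). $\partial_{x^a}$ is the usual partial derivative acting on coefficients; $\partial_{\xi^\alpha}$ is the graded derivation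 with $\partial_{\xi^\alpha}\xi^\beta=\delta^\beta_\alpha$, extended by the graded Leibniz rule with signs $(-1)^{\langle\deg\xi^\alpha,\cdot\rangle}$. *)

theory Defs
  imports "HOL-Analysis.Analysis"
begin

text \<open>The even coordinates x^a are indexed by a finite
  type 'p (points are real^'p).  The formal coordinates are xi^0,...,xi^(N-1); each xi^b has
  degree dg b, a nonzero element of Z_2^n encoded as a nonempty subset of {..<n}
  (the set of positions where the bit is 1).  The numbers q_i are the multiplicities of
  the nonzero degrees among dg 0, ..., dg (N-1).\<close>

definition zpair :: "nat set \<Rightarrow> nat set \<Rightarrow> nat" where
  "zpair u v = card (u \<inter> v) mod 2"

definition valid_mi :: "nat \<Rightarrow> (nat \<Rightarrow> nat set) \<Rightarrow> (nat \<Rightarrow> nat) \<Rightarrow> bool" where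
  "valid_mi N dg al \<longleftrightarrow> (\<forall>g\<ge>N. al g = 0) \<and> (\<forall>g<N. zpair (dg g) (dg g) = 1 \<longrightarrow> al g \<le> 1)"

definition unit_mi :: "nat \<Rightarrow> nat \<Rightarrow> nat" where
  "unit_mi b = (\<lambda>g. if g = b then 1 else 0)"

text \<open>Sign obtained by moving xi^b past the monomial prod_{g<b} (xi^g)^(al g).\<close>
definition msign :: "(nat \<Rightarrow> nat set) \<Rightarrow> nat \<Rightarrow> (nat \<Rightarrow> nat) \<Rightarrow> real" where
  "msign dg b al = (-1) ^ (\<Sum>g<b. al g * zpair (dg b) (dg g))"

definition pdiff :: "'p::finite \<Rightarrow> (real^'p \<Rightarrow> real) \<Rightarrow> real^'p \<Rightarrow> real" where
  "pdiff a g = (\<lambda>x. deriv (\<lambda>t. g (x + t *\<^sub>R axis a 1)) 0)"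

fun pdiffs :: "'p::finite list \<Rightarrow> (real^'p \<Rightarrow> real) \<Rightarrow> real^'p \<Rightarrow> real" where
  "pdiffs [] g = g"
| "pdiffs (a # as) g = pdiff a (pdiffs as g)"

definition smooth_fn :: "(real^'p::finite \<Rightarrow> real) \<Rightarrow> bool" where
  "smooth_fn g \<longleftrightarrow> (\<forall>as. continuous_on UNIV (pdiffs as g) \<and>
      (\<forall>a x. (\<lambda>t. pdiffs as g (x + t *\<^sub>R axis a 1)) differentiable (at 0)))"

text \<open>A function f = sum_al xi^al f_al(x) on R^{p|q} is represented by its coefficient family
  al \<mapsto> f_al; coefficients at non-admissible multi-indices are 0.\<close>
type_synonym 'p sfun = "(nat \<Rightarrow> nat) \<Rightarrow> real^'p \<Rightarrow> real"

definition is_fun :: "nat \<Rightarrow> (nat \<Rightarrow> nat set) \<Rightarrow> 'p::finite sfun \<Rightarrow> bool" where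
  "is_fun N dg f \<longleftrightarrow> (\<forall>al. if valid_mi N dg al then smooth_fn (f al) else f al = (\<lambda>x. 0))"

definition sadd :: "'p::finite sfun \<Rightarrow> 'p sfun \<Rightarrow> 'p sfun" where
  "sadd f g = (\<lambda>al x. f al x + g al x)"

definition d_x :: "'p::finite \<Rightarrow> 'p sfun \<Rightarrow> 'p sfun" where
  "d_x a f = (\<lambda>al. pdiff a (f al))"

definition mul_x :: "'p::finite \<Rightarrow> 'p sfun \<Rightarrow> 'p sfun" where
  "mul_x a f = (\<lambda>al x. x $ a * f al x)"

text \<open>partial_{xi^b}: d/dxi^b (xi^(al+e_b)) = msign * (al b + 1) * xi^al\<close>
definition d_xi :: "nat \<Rightarrow> (nat \<Rightarrow> nat set) \<Rightarrow> nat \<Rightarrow> 'p::finite sfun \<Rightarrow> 'p sfun" where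
  "d_xi N dg b f = (\<lambda>al x. if b < N \<and> valid_mi N dg al \<and> valid_mi N dg (\<lambda>g. al g + unit_mi b g)
      then msign dg b al * real (al b + 1) * f (\<lambda>g. al g + unit_mi b g) x else 0)"

text \<open>left multiplication by xi^b: xi^b * xi^al' = msign * xi^(al'+e_b) (0 if not admissible)\<close>
definition mul_xi :: "nat \<Rightarrow> (nat \<Rightarrow> nat set) \<Rightarrow> nat \<Rightarrow> 'p::finite sfun \<Rightarrow> 'p sfun" where
  "mul_xi N dg b f = (\<lambda>al x. if b < N \<and> valid_mi N dg al \<and> 1 \<le> al b
      then msign dg b (\<lambda>g. al g - unit_mi b g) * f (\<lambda>g. al g - unit_mi b g) x else 0)"

definition euler :: "nat \<Rightarrow> (nat \<Rightarrow> nat set) \<Rightarrow> 'p::finite sfun \<Rightarrow> 'p sfun" where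
  "euler N dg f = (\<lambda>al x. (\<Sum>a\<in>UNIV. mul_x a (d_x a f) al x)
                         + (\<Sum>b<N. mul_xi N dg b (d_xi N dg b f) al x))"

definition coord_x :: "'p::finite \<Rightarrow> 'p sfun" where
  "coord_x a = (\<lambda>al x. if al = (\<lambda>_. 0) then x $ a else 0)"

definition coord_xi :: "nat \<Rightarrow> 'p::finite sfun" where
  "coord_xi b = (\<lambda>al x. if al = unit_mi b then 1 else 0)"

end

theory Submission
  imports Defs
begin

(* The Euler field acts on each coefficient f_al separately, as x.grad + |al|: the signs in
   xi^b d/dxi^b cancel.  Weight 1 thus means x.grad f_al = (1 - |al|) f_al, i.e. t h' = (1 - |al|) h for
   h t = f_al (t y).  For |al| >= 2 the function t^(|al|-1) h is constant and vanishes at 0;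
   for |al| = 1, h is constant; for al = 0, h t / t is constant, and its limit at 0 is the
   derivative of h there, which makes f_0 linear.  Differentiating along rays needs the chain
   rule, hence a total derivative, which continuous partial derivatives provide. *)

locale partially_C1 =
  fixes g :: "real^'p::finite \<Rightarrow> real"
  assumes partial_differentiable: "\<And>a y. (\<lambda>t. g (y + t *\<^sub>R axis a 1)) differentiable (at 0)"
    and partial_continuous: "\<And>a. continuous_on UNIV (pdiff a g)"
begin

lemma has_real_derivative_along_axis:
  "((\<lambda>t. g (y + t *\<^sub>R axis a 1)) has_real_derivative pdiff a g (y + s *\<^sub>R axis a 1)) (at s)"
proof -
  have "((\<lambda>t. g ((y + s *\<^sub>R axis a 1) + t *\<^sub>R axis a 1)) has_real_derivative
          pdiff a g (y + s *\<^sub>R axis a 1)) (at 0)"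
    unfolding pdiff_def using partial_differentiable DERIV_deriv_iff_real_differentiable by blast
  moreover have "(\<lambda>t. g ((y + s *\<^sub>R axis a 1) + t *\<^sub>R axis a 1))
      = (\<lambda>t. g (y + (t + s) *\<^sub>R axis a 1))"
    by (simp add: algebra_simps)
  ultimately show ?thesis
    using DERIV_shift[of "\<lambda>t. g (y + t *\<^sub>R axis a 1)" _ 0 s] by simp
qed

lemma axis_increment_bound:
  assumes "\<And>t. t \<in> closed_segment 0 s \<Longrightarrow> \<bar>pdiff a g (y + t *\<^sub>R axis a 1) - c\<bar> \<le> e"
  shows "\<bar>g (y + s *\<^sub>R axis a 1) - g y - s * c\<bar> \<le> e * \<bar>s\<bar>"
proof -
  define \<phi> where "\<phi> t = g (y + t *\<^sub>R axis a 1) - t * c" for t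
  have "(\<phi> has_real_derivative pdiff a g (y + t *\<^sub>R axis a 1) - c) (at t within closed_segment 0 s)" for t
    unfolding \<phi>_def[abs_def]
    using DERIV_cmult_right[OF DERIV_ident, of c]
    by (intro has_field_derivative_at_within[OF DERIV_diff] has_real_derivative_along_axis) simp
  then have "norm (\<phi> s - \<phi> 0) \<le> e * norm (s - 0)"
    using assms by (intro field_differentiable_bound[OF convex_closed_segment]) auto
  then show ?thesis by (simp add: \<phi>_def algebra_simps)
qed

(* Coordinates are released one at a time: the increment in the new direction a is controlled
   by the mean value bound along that axis together with continuity of pdiff a g at x. *)
lemma coordinate_subspace_linearization:
  assumes "finite S" and "e > 0"
  shows "\<exists>d>0. \<forall>h. (\<forall>b. b \<notin> S \<longrightarrow> h$b = 0) \<and> norm h < d \<longrightarrow>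
           \<bar>g (x + h) - g x - (\<Sum>b\<in>S. h$b * pdiff b g x)\<bar> \<le> e * norm h"
  using assms
proof (induction S arbitrary: e rule: finite_induct)
  case empty
  have zero: "h = 0" if "\<forall>b. h$b = 0" for h :: "real^'p"
    using that by (simp add: vec_eq_iff)
  show ?case by (intro exI[of _ 1]) (auto dest!: zero)
next
  case (insert a S)
  then have "e/2 > 0" by simp
  from insert.IH[OF this] obtain d1 where "d1 > 0" and d1: "\<And>h. \<forall>b. b \<notin> S \<longrightarrow> h$b = 0 \<Longrightarrow>
      norm h < d1 \<Longrightarrow> \<bar>g (x + h) - g x - (\<Sum>b\<in>S. h$b * pdiff b g x)\<bar> \<le> e/2 * norm h"
    by blast
  from partial_continuous[of a] \<open>e/2 > 0\<close> obtain d2 where "d2 > 0" and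
    d2: "\<And>y. dist y x < d2 \<Longrightarrow> \<bar>pdiff a g y - pdiff a g x\<bar> < e/2"
    unfolding continuous_on_iff dist_real_def by blast
  have "\<bar>g (x + h) - g x - (\<Sum>b\<in>insert a S. h$b * pdiff b g x)\<bar> \<le> e * norm h"
    if h: "\<forall>b. b \<notin> insert a S \<longrightarrow> h$b = 0" "norm h < min d1 d2" for h
  proof -
    define h' where "h' = h - h$a *\<^sub>R axis a 1"
    have h'_nth: "h'$b = (if b = a then 0 else h$b)" for b
      by (simp add: h'_def axis_def)
    have norm_h': "norm (h' + t *\<^sub>R axis a 1) \<le> norm h" if "\<bar>t\<bar> \<le> \<bar>h$a\<bar>" for t
      using that by (intro norm_le_componentwise_cart) (simp add: h'_nth axis_def)
    have "\<bar>g (x + h') - g x - (\<Sum>b\<in>S. h'$b * pdiff b g x)\<bar> \<le> e/2 * norm h'"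
      using h norm_h'[of 0] by (intro d1) (auto simp: h'_nth)
    also have "\<dots> \<le> e/2 * norm h"
      using norm_h'[of 0] \<open>e > 0\<close> by simp
    finally have inner: "\<bar>g (x + h') - g x - (\<Sum>b\<in>S. h'$b * pdiff b g x)\<bar> \<le> e/2 * norm h" .
    have "\<bar>g ((x + h') + h$a *\<^sub>R axis a 1) - g (x + h') - h$a * pdiff a g x\<bar> \<le> e/2 * \<bar>h$a\<bar>"
    proof (rule axis_increment_bound)
      fix t assume "t \<in> closed_segment 0 (h$a)"
      then have "\<bar>t\<bar> \<le> \<bar>h$a\<bar>"
        by (auto simp: closed_segment_eq_real_ivl split: if_split_asm)
      then have "norm (h' + t *\<^sub>R axis a 1) < d2"
        using norm_h'[of t] h(2) by linarith
      then show "\<bar>pdiff a g (x + h' + t *\<^sub>R axis a 1) - pdiff a g x\<bar> \<le> e/2"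
        using d2[of "x + h' + t *\<^sub>R axis a 1"] by (simp add: dist_norm)
    qed
    also have "\<dots> \<le> e/2 * norm h"
      using \<open>e > 0\<close> component_le_norm_cart[of h a] by simp
    finally have outer: "\<bar>g (x + h) - g (x + h') - h$a * pdiff a g x\<bar> \<le> e/2 * norm h"
      by (simp add: h'_def algebra_simps)
    have "(\<Sum>b\<in>insert a S. h$b * pdiff b g x) = h$a * pdiff a g x + (\<Sum>b\<in>S. h'$b * pdiff b g x)"
      using insert.hyps by (auto simp: h'_nth intro!: sum.cong)
    then show ?thesis using inner outer by linarith
  qed
  then show ?case
    using \<open>d1 > 0\<close> \<open>d2 > 0\<close> by (intro exI[of _ "min d1 d2"]) auto
qed

lemma has_derivative_partials:
  "(g has_derivative (\<lambda>h. \<Sum>b\<in>UNIV. h$b * pdiff b g x)) (at x)"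
  unfolding has_derivative_at_alt
proof (intro conjI allI impI)
  show "bounded_linear (\<lambda>h. \<Sum>b\<in>UNIV. h$b * pdiff b g x)"
    by (intro bounded_linear_sum bounded_linear_compose[OF bounded_linear_mult_left bounded_linear_vec_nth])
  fix e :: real assume "e > 0"
  then obtain d where "d > 0" and
    approx: "\<And>h. norm h < d \<Longrightarrow> \<bar>g (x + h) - g x - (\<Sum>b\<in>UNIV. h$b * pdiff b g x)\<bar> \<le> e * norm h"
    using coordinate_subspace_linearization[of UNIV e x] by auto
  then show "\<exists>d>0. \<forall>y. norm (y - x) < d \<longrightarrow>
      norm (g y - g x - (\<Sum>b\<in>UNIV. (y - x)$b * pdiff b g x)) \<le> e * norm (y - x)"
    using approx[of "_ - x"] by (intro exI[of _ d]) auto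
qed

lemma has_real_derivative_along_ray:
  "((\<lambda>t. g (t *\<^sub>R y)) has_real_derivative (\<Sum>b\<in>UNIV. y$b * pdiff b g (t *\<^sub>R y))) (at t)"
proof -
  have "((\<lambda>t. g (t *\<^sub>R y)) has_derivative
      (\<lambda>s. \<Sum>b\<in>UNIV. (s *\<^sub>R y)$b * pdiff b g (t *\<^sub>R y))) (at t)"
    using has_derivative_compose[OF has_derivative_scaleR_left[OF has_derivative_ident]
        has_derivative_partials] by simp
  moreover have "(\<lambda>s. \<Sum>b\<in>UNIV. (s *\<^sub>R y)$b * pdiff b g (t *\<^sub>R y))
      = (*) (\<Sum>b\<in>UNIV. y$b * pdiff b g (t *\<^sub>R y))"
    by (auto simp: sum_distrib_left algebra_simps)
  ultimately show ?thesis
    by (simp add: has_field_derivative_def)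
qed

end

locale euler_homogeneous = partially_C1 g for g :: "real^'p::finite \<Rightarrow> real" +
  fixes c :: real
  assumes euler_identity: "\<And>y. (\<Sum>b\<in>UNIV. y$b * pdiff b g y) = c * g y"
begin

lemma ray_euler_identity: "t * (\<Sum>b\<in>UNIV. y$b * pdiff b g (t *\<^sub>R y)) = c * g (t *\<^sub>R y)"
  using euler_identity[of "t *\<^sub>R y"] by (simp add: sum_distrib_left algebra_simps)

lemma continuous_on_ray: "continuous_on A (\<lambda>t. g (t *\<^sub>R y))"
  using has_real_derivative_along_ray
  by (meson DERIV_continuous continuous_at_imp_continuous_on)

lemma eq_0_if_negative_weight:
  assumes "c = - real m" and "m \<ge> 1"
  shows "g y = 0"
proof -
  define u where "u t = t^m * g (t *\<^sub>R y)" for t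
  have "(u has_real_derivative 0) (at t)" for t
  proof -
    define D where "D = (\<Sum>b\<in>UNIV. y$b * pdiff b g (t *\<^sub>R y))"
    have "(u has_real_derivative real m * t^(m-1) * g (t *\<^sub>R y) + t^m * D) (at t)"
      unfolding u_def[abs_def] D_def
      by (auto intro!: derivative_eq_intros has_real_derivative_along_ray)
    moreover have "t^m * D = t^(m-1) * (t * D)"
      using \<open>m \<ge> 1\<close> by (simp add: power_eq_if)
    ultimately show ?thesis
      using ray_euler_identity[of t y] assms(1) by (simp add: D_def)
  qed
  then have "u 1 = u 0"
    using DERIV_isconst_all by blast
  then show ?thesis
    using \<open>m \<ge> 1\<close> by (simp add: u_def)
qed

lemma constant_if_weight_0:
  assumes "c = 0"
  shows "g y = g 0"
proof -
  have "g (1 *\<^sub>R y) = g (0 *\<^sub>R y)"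
  proof (rule DERIV_isconst_end[of 0 1 "\<lambda>t. g (t *\<^sub>R y)"])
    fix t :: real assume "0 < t"
    then have "(\<Sum>b\<in>UNIV. y$b * pdiff b g (t *\<^sub>R y)) = 0"
      using ray_euler_identity[of t y] assms by simp
    then show "((\<lambda>t. g (t *\<^sub>R y)) has_real_derivative 0) (at t)"
      using has_real_derivative_along_ray[of y t] by simp
  qed (simp_all add: continuous_on_ray)
  then show ?thesis by simp
qed

lemma linear_if_weight_1:
  assumes "c = 1"
  shows "g y = (\<Sum>b\<in>UNIV. y$b * pdiff b g 0)"
proof -
  have "g 0 = 0"
    using euler_identity[of 0] assms by simp
  have "g (t *\<^sub>R y) = t * g y" if "0 < t" "t < 1" for t
  proof -
    have "g (1 *\<^sub>R y) / 1 = g (t *\<^sub>R y) / t"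
    proof (rule DERIV_isconst_end[of t 1 "\<lambda>s. g (s *\<^sub>R y) / s"])
      show "continuous_on {t..1} (\<lambda>s. g (s *\<^sub>R y) / s)"
        using \<open>0 < t\<close> by (intro continuous_intros continuous_on_ray) auto
      fix s :: real assume "t < s"
      then have "s \<noteq> 0" using \<open>0 < t\<close> by simp
      define D where "D = (\<Sum>b\<in>UNIV. y$b * pdiff b g (s *\<^sub>R y))"
      have "((\<lambda>s. g (s *\<^sub>R y) / s) has_real_derivative (D * s - g (s *\<^sub>R y) * 1) / (s * s)) (at s)"
        unfolding D_def using \<open>s \<noteq> 0\<close>
        by (intro derivative_eq_intros) (auto intro: has_real_derivative_along_ray)
      moreover have "D * s - g (s *\<^sub>R y) * 1 = 0"
        using ray_euler_identity[of s y] assms by (simp add: D_def algebra_simps)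
      ultimately show "((\<lambda>s. g (s *\<^sub>R y) / s) has_real_derivative 0) (at s)"
        by simp
    qed (use that in auto)
    then show ?thesis
      using \<open>0 < t\<close> by (simp add: field_simps)
  qed
  then have "\<forall>\<^sub>F t in at_right 0. (g (t *\<^sub>R y) - g (0 *\<^sub>R y)) / (t - 0) = g y"
    using \<open>g 0 = 0\<close> unfolding eventually_at_right_field by (intro exI[of _ 1]) auto
  moreover have "((\<lambda>t. (g (t *\<^sub>R y) - g (0 *\<^sub>R y)) / (t - 0)) \<longlongrightarrow>
      (\<Sum>b\<in>UNIV. y$b * pdiff b g (0 *\<^sub>R y))) (at_right 0)"
    using has_field_derivative_at_within[OF has_real_derivative_along_ray, of y 0 "{0<..}"]
    unfolding has_field_derivative_iff by simp
  ultimately have "((\<lambda>t. g y) \<longlongrightarrow> (\<Sum>b\<in>UNIV. y$b * pdiff b g 0)) (at_right (0::real))"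
    using tendsto_cong by force
  then show ?thesis
    using tendsto_const_iff[OF trivial_limit_at_right_real] by blast
qed

end

lemma smooth_fn_partially_C1: "smooth_fn g \<Longrightarrow> partially_C1 g"
  unfolding smooth_fn_def by unfold_locales (metis pdiffs.simps)+

lemma unit_mi_neq_0 [simp]: "unit_mi b \<noteq> (\<lambda>_. 0)" "(\<lambda>_. 0) \<noteq> unit_mi b"
  by (auto simp: unit_mi_def fun_eq_iff)

lemma unit_mi_eq_iff [simp]: "unit_mi b = unit_mi b' \<longleftrightarrow> b = b'"
  by (auto simp: unit_mi_def fun_eq_iff)

lemma valid_mi_0: "valid_mi N dg (\<lambda>_. 0)"
  by (simp add: valid_mi_def)

lemma valid_mi_unit_mi: "b < N \<Longrightarrow> valid_mi N dg (unit_mi b)"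
  by (simp add: valid_mi_def unit_mi_def)

lemma valid_mi_degree_le_1:
  assumes "valid_mi N dg al" and "(\<Sum>g<N. al g) \<le> 1"
  shows "al = (\<lambda>_. 0) \<or> (\<exists>b<N. al = unit_mi b)"
proof -
  have outside: "al g = 0" if "\<not> g < N" for g
    using assms(1) that by (simp add: valid_mi_def)
  consider "(\<Sum>g<N. al g) = 0" | "(\<Sum>g<N. al g) = 1"
    using assms(2) by linarith
  then show ?thesis
  proof cases
    case 1
    then have "al = (\<lambda>_. 0)"
      using outside by (auto simp: fun_eq_iff)
    then show ?thesis ..
  next
    case 2
    then obtain b where "b < N" "al b = 1" "\<And>g. g < N \<Longrightarrow> g \<noteq> b \<Longrightarrow> al g = 0"
      using sum_eq_1_iff[of "{..<N}" al] by auto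
    then have "al = unit_mi b"
      using outside by (auto simp: fun_eq_iff unit_mi_def)
    then show ?thesis
      using \<open>b < N\<close> by blast
  qed
qed

lemma mul_xi_d_xi_apply:
  assumes "valid_mi N dg al" and "b < N"
  shows "mul_xi N dg b (d_xi N dg b f) al x = real (al b) * f al x"
proof (cases "al b = 0")
  case False
  define al' where "al' = (\<lambda>g. al g - unit_mi b g)"
  have "valid_mi N dg al'"
    using assms(1) unfolding valid_mi_def al'_def by (metis diff_le_self le_trans le_zero_eq)
  moreover have "(\<lambda>g. al' g + unit_mi b g) = al"
    using False by (auto simp: al'_def unit_mi_def fun_eq_iff)
  ultimately have "d_xi N dg b f al' x = msign dg b al' * real (al' b + 1) * f al x"
    using assms by (simp add: d_xi_def)
  moreover have "mul_xi N dg b (d_xi N dg b f) al x = msign dg b al' * d_xi N dg b f al' x"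
    using False assms by (simp add: mul_xi_def al'_def)
  \<comment> \<open>moving \<xi>^b out of the monomial and back in produces the same sign twice\<close>
  moreover have "msign dg b al' * msign dg b al' = 1"
    unfolding msign_def power_mult_distrib[symmetric] by simp
  moreover have "al' b + 1 = al b"
    using False by (simp add: al'_def unit_mi_def)
  ultimately show ?thesis
    by (metis mult.assoc mult_1)
qed (simp add: mul_xi_def)

lemma euler_apply:
  assumes "valid_mi N dg al"
  shows "euler N dg f al x = (\<Sum>a\<in>UNIV. x$a * pdiff a (f al) x) + real (\<Sum>b<N. al b) * f al x"
  using assms
  by (simp add: euler_def mul_x_def d_x_def mul_xi_d_xi_apply sum_distrib_right)

lemma euler_homogeneous_coeff:
  assumes "is_fun N dg f" and "euler N dg f = f" and "valid_mi N dg al"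
  shows "euler_homogeneous (f al) (1 - real (\<Sum>b<N. al b))"
proof -
  interpret partially_C1 "f al"
    using assms(1,3) by (intro smooth_fn_partially_C1) (simp add: is_fun_def)
  show ?thesis
  proof
    fix y
    show "(\<Sum>b\<in>UNIV. y$b * pdiff b (f al) y) = (1 - real (\<Sum>b<N. al b)) * f al y"
      using euler_apply[OF assms(3), of f y] fun_cong[OF fun_cong[OF assms(2)], of al y]
      by (simp add: algebra_simps)
  qed
qed

lemma higher_coeff_eq_0_if_euler_fixed:
  assumes "is_fun N dg f" and "euler N dg f = f"
    and "al \<noteq> (\<lambda>_. 0)" and "\<forall>b<N. al \<noteq> unit_mi b"
  shows "f al x = 0"
proof (cases "valid_mi N dg al")
  case True
  define m where "m = (\<Sum>b<N. al b) - 1"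
  have "(\<Sum>b<N. al b) \<ge> 2"
    using valid_mi_degree_le_1[OF True] assms(3,4) by fastforce
  then have "1 - real (\<Sum>b<N. al b) = - real m" and "m \<ge> 1"
    by (auto simp: m_def of_nat_diff)
  interpret euler_homogeneous "f al" "1 - real (\<Sum>b<N. al b)"
    using euler_homogeneous_coeff[OF assms(1,2) True] .
  show ?thesis
    by (rule eq_0_if_negative_weight) fact+
next
  case False
  then show ?thesis
    using assms(1) by (simp add: is_fun_def)
qed

theorem proposition4p4:
  fixes n N :: nat and dg :: "nat \<Rightarrow> nat set" and f :: "'p::finite sfun"
  assumes "n \<ge> 1"
    and "\<And>b. b < N \<Longrightarrow> dg b \<subseteq> {..<n} \<and> dg b \<noteq> {}"
    and "is_fun N dg f"
    and "euler N dg f = f"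
  shows "\<exists>F :: 'p \<Rightarrow> real. \<exists>G :: nat \<Rightarrow> real.
           f = (\<lambda>al x. (\<Sum>a\<in>UNIV. F a * coord_x a al x) + (\<Sum>b<N. G b * coord_xi b al x))"
proof (intro exI ext)
  fix al :: "nat \<Rightarrow> nat" and x :: "real^'p"
  have coeff: "euler_homogeneous (f al) (1 - real (\<Sum>b<N. al b))" if "valid_mi N dg al"
    using euler_homogeneous_coeff[OF assms(3,4) that] .
  consider (zero) "al = (\<lambda>_. 0)" | (unit) b where "b < N" "al = unit_mi b"
    | (higher) "al \<noteq> (\<lambda>_. 0)" "\<forall>b<N. al \<noteq> unit_mi b"
    by blast
  then show "f al x = (\<Sum>a\<in>UNIV. pdiff a (f (\<lambda>_. 0)) 0 * coord_x a al x)
                    + (\<Sum>b<N. f (unit_mi b) 0 * coord_xi b al x)"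
  proof cases
    case zero
    then interpret euler_homogeneous "f al" 1
      using coeff valid_mi_0[of N dg] zero by simp
    show ?thesis
      using linear_if_weight_1[of x] zero by (simp add: coord_x_def coord_xi_def mult.commute)
  next
    case (unit b)
    then interpret euler_homogeneous "f al" 0
      using coeff valid_mi_unit_mi[of b N dg] by (simp add: unit_mi_def)
    show ?thesis
      using constant_if_weight_0[of x] unit
      by (simp add: coord_x_def coord_xi_def if_distrib sum.delta cong: if_cong)
  next
    case higher
    then show ?thesis
      using higher_coeff_eq_0_if_euler_fixed[OF assms(3,4)]
      by (auto simp: coord_x_def coord_xi_def intro!: sum.neutral)
  qed
qed

end
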